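(* Let $N$ and $n$ be positive integers. Let $G$ be the complete graph on a vertex set $A$ and let $(A_i)_{i=1}^{n}$ be a partition of $A$ into pairwise disjoint sets with $|A_i|\ge N$ for every $i\in[n]$. Then for any $2$-colouring (red/blue) of the edges of $G$, either there is a red path $u_1u_2\cdots u_n$ with $u_i\in A_i$ for each $i\in[n]$, or for some $i\in[n-1]$ there exist $B_i\subseteq A_i$ and $B_{i+1}\subseteq A_{i+1}$ with $\min\{|B_i|,|B_{i+1}|\}\ge N/2$ such that all edges between $B_i$ and $B_{i+1}$ are blue. *)

theory Defs
  imports Complex_Main
begin
end

theory Submission
  imports Defs
begin

text \<open>Let \<open>E\<^sub>i\<close> be the set of vertices of \<open>A\<^sub>i\<close> in which some red path \<open>u\<^sub>1 \<dots> u\<^sub>i\<close> through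
  \<open>A\<^sub>1, \<dots>, A\<^sub>i\<close> ends. No red edge joins \<open>E\<^sub>i\<close> to \<open>A\<^sub>i\<^sub>+\<^sub>1 - E\<^sub>i\<^sub>+\<^sub>1\<close>, and one of \<open>E\<^sub>i\<^sub>+\<^sub>1\<close>,
  \<open>A\<^sub>i\<^sub>+\<^sub>1 - E\<^sub>i\<^sub>+\<^sub>1\<close> has at least \<open>N/2\<close> elements. So, starting from \<open>E\<^sub>1 = A\<^sub>1\<close>, either every
  \<open>E\<^sub>i\<close> has at least \<open>N/2 > 0\<close> elements, and \<open>E\<^sub>n\<close> yields a red path, or at the first \<open>i\<close> with
  \<open>|E\<^sub>i\<^sub>+\<^sub>1| < N/2\<close> the pair \<open>E\<^sub>i\<close>, \<open>A\<^sub>i\<^sub>+\<^sub>1 - E\<^sub>i\<^sub>+\<^sub>1\<close> is entirely blue.\<close>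

definition red_path_ends :: "(nat \<Rightarrow> 'a set) \<Rightarrow> ('a \<Rightarrow> 'a \<Rightarrow> bool) \<Rightarrow> nat \<Rightarrow> 'a set" where
  "red_path_ends A red i =
     {v. \<exists>u. (\<forall>k\<in>{1..i}. u k \<in> A k) \<and> (\<forall>k\<in>{1..<i}. red (u k) (u (Suc k))) \<and> u i = v}"

lemma red_path_ends_subset: "1 \<le> i \<Longrightarrow> red_path_ends A red i \<subseteq> A i"
  unfolding red_path_ends_def by auto

lemma red_path_ends_one: "red_path_ends A red 1 = A 1"
  unfolding red_path_ends_def by (auto intro!: exI[of _ "\<lambda>_. _"])

lemma red_path_ends_Suc:
  assumes "v \<in> red_path_ends A red i" and "red v w" and "w \<in> A (Suc i)"
  shows "w \<in> red_path_ends A red (Suc i)"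
proof -
  from assms(1) obtain u where u: "\<forall>k\<in>{1..i}. u k \<in> A k"
      "\<forall>k\<in>{1..<i}. red (u k) (u (Suc k))" "u i = v"
    unfolding red_path_ends_def by blast
  let ?u = "u(Suc i := w)"
  have "\<forall>k\<in>{1..Suc i}. ?u k \<in> A k"
    using u(1) assms(3) by (auto simp: le_Suc_eq)
  moreover have "\<forall>k\<in>{1..<Suc i}. red (?u k) (?u (Suc k))"
    using u(2,3) assms(2) by (auto simp: less_Suc_eq)
  ultimately show ?thesis
    unfolding red_path_ends_def by (intro CollectI exI[of _ ?u]) simp
qed

lemma no_red_edge_to_non_ends:
  assumes "x \<in> red_path_ends A red i" and "y \<in> A (Suc i) - red_path_ends A red (Suc i)"
  shows "\<not> red x y"
proof
  assume "red x y"
  with assms show False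
    using red_path_ends_Suc[OF assms(1)] by blast
qed

lemma half_card_subset_or_complement:
  assumes "finite X" and "S \<subseteq> X" and "N \<le> card X"
  shows "real N / 2 \<le> real (card S) \<or> real N / 2 \<le> real (card (X - S))"
proof -
  have "finite S"
    using assms(1,2) by (rule finite_subset[rotated])
  then have "card (X - S) + card S = card X"
    using card_Diff_subset[OF _ assms(2)] card_mono[OF assms(1,2)] by simp
  then show ?thesis
    using assms(3) by linarith
qed

definition large_blue_pair :: "(nat \<Rightarrow> 'a set) \<Rightarrow> ('a \<Rightarrow> 'a \<Rightarrow> bool) \<Rightarrow> nat \<Rightarrow> nat \<Rightarrow> bool" where
  "large_blue_pair A red N j \<longleftrightarrow>
     (\<exists>B C. B \<subseteq> A j \<and> C \<subseteq> A (Suc j) \<and> real (min (card B) (card C)) \<ge> real N / 2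
        \<and> (\<forall>x\<in>B. \<forall>y\<in>C. \<not> red x y))"

lemma large_blue_pair_ends_non_ends:
  assumes "1 \<le> i"
    and "real N / 2 \<le> real (card (red_path_ends A red i))"
    and "real N / 2 \<le> real (card (A (Suc i) - red_path_ends A red (Suc i)))"
  shows "large_blue_pair A red N i"
  unfolding large_blue_pair_def
proof (intro exI conjI)
  show "red_path_ends A red i \<subseteq> A i"
    using assms(1) by (rule red_path_ends_subset)
  show "A (Suc i) - red_path_ends A red (Suc i) \<subseteq> A (Suc i)"
    by blast
  show "real N / 2 \<le> real (min (card (red_path_ends A red i))
      (card (A (Suc i) - red_path_ends A red (Suc i))))"
    using assms(2,3) by (simp only: of_nat_min min.bounded_iff)
  show "\<forall>x\<in>red_path_ends A red i. \<forall>y\<in>A (Suc i) - red_path_ends A red (Suc i). \<not> red x y"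
    by (intro ballI no_red_edge_to_non_ends)
qed

lemma red_path_ends_large_or_large_blue_pair:
  assumes "1 \<le> i"
    and "\<And>k. k \<in> {1..i} \<Longrightarrow> finite (A k)"
    and "\<And>k. k \<in> {1..i} \<Longrightarrow> N \<le> card (A k)"
  shows "real N / 2 \<le> real (card (red_path_ends A red i))
       \<or> (\<exists>j\<in>{1..<i}. large_blue_pair A red N j)"
  using assms
proof (induction i rule: nat_induct_at_least)
  case base
  then show ?case
    using red_path_ends_one[of A red] by (simp del: One_nat_def)
next
  case (Suc i)
  let ?E = "red_path_ends A red"
  have IH: "real N / 2 \<le> real (card (?E i)) \<or> (\<exists>j\<in>{1..<i}. large_blue_pair A red N j)"
    using Suc by simp
  have split: "real N / 2 \<le> real (card (?E (Suc i)))
      \<or> real N / 2 \<le> real (card (A (Suc i) - ?E (Suc i)))"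
    by (rule half_card_subset_or_complement)
      (use Suc.prems red_path_ends_subset[of "Suc i" A red] in auto)
  show ?case
    using IH split large_blue_pair_ends_non_ends[OF Suc.hyps, of N A red] Suc.hyps
    by (auto simp: less_Suc_eq)
qed

theorem lemmal:
  fixes N n :: nat
    and A :: "nat \<Rightarrow> 'a set"
    and red :: "'a \<Rightarrow> 'a \<Rightarrow> bool"
  assumes "N \<ge> 1" and "n \<ge> 1"
    and "\<And>i. i \<in> {1..n} \<Longrightarrow> finite (A i)"
    and "\<And>i. i \<in> {1..n} \<Longrightarrow> card (A i) \<ge> N"
    and "\<And>i j. i \<in> {1..n} \<Longrightarrow> j \<in> {1..n} \<Longrightarrow> i \<noteq> j \<Longrightarrow> A i \<inter> A j = {}"
    and red_sym: "\<And>x y. red x y = red y x"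
  shows "(\<exists>u :: nat \<Rightarrow> 'a. (\<forall>i\<in>{1..n}. u i \<in> A i) \<and> (\<forall>i\<in>{1..<n}. red (u i) (u (Suc i))))
       \<or> (\<exists>i\<in>{1..<n}. \<exists>B C. B \<subseteq> A i \<and> C \<subseteq> A (Suc i)
            \<and> real (min (card B) (card C)) \<ge> real N / 2
            \<and> (\<forall>x\<in>B. \<forall>y\<in>C. \<not> red x y))"
proof -
  have "real N / 2 \<le> real (card (red_path_ends A red n))
      \<or> (\<exists>j\<in>{1..<n}. large_blue_pair A red N j)"
    using assms(2-4) by (rule red_path_ends_large_or_large_blue_pair)
  then show ?thesis
  proof
    assume "real N / 2 \<le> real (card (red_path_ends A red n))"
    then have "red_path_ends A red n \<noteq> {}"
      using assms(1) by auto
    then show ?thesis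
      unfolding red_path_ends_def by blast
  next
    assume "\<exists>j\<in>{1..<n}. large_blue_pair A red N j"
    then show ?thesis
      unfolding large_blue_pair_def by blast
  qed
qed

end
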